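(* Let $b>0$, $\beta\in(0,1)$, and let $R>0$ be such that, for the functions $\underline u_{\rm out}(r) = Lr^{-m} - br^{-l} \log \frac{r}{R}$, $\underline v_{\rm out}(r) = m(n-2-m)Lr^{-m-2} +\big[- l(n-2-l) \log \frac{r}{R} + (n-2-2l)\big]br^{-l-2}$, $\underline w_{\rm out}(r) = m(m+2)(n-2-m)(n-4-m)Lr^{-m-4} - l(l+2)(n-2-l)(n-4-l)br^{-l-4} \log \frac{r}{R} + (n-2-2l)(l+2)(n-4-l) b r^{-l-4}$, the numbers $\underline r_1 = \sup\{ r>0 : \underline u_{\rm out}(r) \leqslant 0 \}$, $\underline r_2 = \sup\{ r>0 : \underline v_{\rm out}(r) \leqslant 0 \}$, $\underline r_3 = \sup\{ r>0 : \underline w_{\rm out}(r) \leqslant 0 \}$ are well defined and satisfy $R<\underline r_1<\underline r_2<\underline r_3<+\infty$. For $c>0$ and $r>R$ define, writing $\ell(r)=\log\frac{r}{R}$, \[ \begin{aligned} \overline u_{\rm out}(r) &= Lr^{-m} -b r^{-l} \ell + cr^{-l} \ell^{\beta},\\ \overline v_{\rm out}(r) &= m(n-2-m)Lr^{-m-2} - \big[ l(n-2-l) \ell - (n-2-2l)\big] br^{-l-2} \\ &\quad + \big[ l(n-2-l) \ell^{\beta} -\beta(n-2-2l) \ell^{\beta-1} +\beta(1-\beta) \ell^{\beta-2} \big]cr^{-l-2},\\ \overline w_{\rm out}(r) &= m(m+2)(n-2-m)(n-4-m)Lr^{-m-4} - (l+2)(n-4-l) \big[ l(n-2-l) \ell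 -(n-2-2l) \big]br^{-l-4}\\ &\quad +\Big[ l (l+2) (n-2-l) (n-4-l) \ell^{\beta} - \beta(n-2-2l) (l+2)(n-4-l) \ell^{\beta-1} \\ &\qquad +\beta(1-\beta) \big(l(n-2-l)+(l+2)(n-4-l)\big) \ell^{\beta-2} + \beta(1-\beta)(2-\beta) (n-2-2l) \ell^{\beta-3} \\ &\qquad - \beta(1-\beta)(2-\beta)(3-\beta) \ell^{\beta-4} \Big]cr^{-l-4}. \end{aligned} \] Then there exists $c_1>0$ such that for all $c>c_1$, \[ -\Delta \overline u_{\rm out} = \overline v_{\rm out} \ \text{ for all } r>R,\qquad -\Delta \overline v_{\rm out} = \overline w_{\rm out} \ \text{ for all } r>R,\qquad -\Delta \overline w_{\rm out} \geqslant \overline u_{\rm out}^p \ \text{ for all } r>\overline r_1, \] where $\overline r_1 = R \exp\big((c/b)^{\frac{1}{1-\beta}}\big)$.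
   Context: Let $n\geqslant 15$ and $p=p_{\mathsf{JL}}(6,n)$, where $p_{\mathsf{JL}}(6,n)=\frac{(n+4)\sqrt{3} - \sqrt{\sqrt[3]{K_0+K_1}+ \sqrt[3]{K_0-K_1} + 3n^2+32 }}{(n-8)\sqrt{3} - \sqrt{\sqrt[3]{K_0+K_1} + \sqrt[3]{K_0-K_1} + 3n^2+32 }}$ with $2K_0 =-27n^6+324 n^5-756n^4-2592 n^3 + 25776 n^2 +5184 n -23744$, $2K_1 = \sqrt{(2K_0)^2 - 4(192n^2+256)^3}$. Let $m=6/(p-1)$, $L=\big(m(m+2)(m+4)(n-2-m)(n-4-m)(n-6-m)\big)^{1/(p-1)}$, let $\lambda_3$ be the smallest positive root of $P(\lambda)=(m+\lambda)(m+\lambda+2)(m+\lambda+4)(n-2-m-\lambda)(n-4-m-\lambda)(n-6-m-\lambda)-pL^{p-1}$, and set $l=m+\lambda_3$. For a function $f$ of $r=|x|$, $\Delta f$ denotes the Laplacian in $\mathbf R^n$ of $x\mapsto f(|x|)$, i.e. $f''+\frac{n-1}{r}f'$. *)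

theory Defs
  imports "HOL-Analysis.Analysis"
begin

text \<open>The Joseph--Lundgren type exponent p_JL(6,n) (cube roots via root 3, odd root, sign preserving).\<close>
definition pJL6 :: "nat \<Rightarrow> real" where
  "pJL6 n = (let N = real n;
     K0 = (-27*N^6 + 324*N^5 - 756*N^4 - 2592*N^3 + 25776*N^2 + 5184*N - 23744) / 2;
     K1 = sqrt ((2*K0)^2 - 4*(192*N^2 + 256)^3) / 2;
     S = sqrt (root 3 (K0 + K1) + root 3 (K0 - K1) + 3*N^2 + 32)
   in ((N + 4) * sqrt 3 - S) / ((N - 8) * sqrt 3 - S))"

definition mexp :: "nat \<Rightarrow> real" where
  "mexp n = 6 / (pJL6 n - 1)"

definition Lconst :: "nat \<Rightarrow> real" where
  "Lconst n = (let m = mexp n; N = real n in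
     (m*(m+2)*(m+4)*(N-2-m)*(N-4-m)*(N-6-m)) powr (1 / (pJL6 n - 1)))"

definition Ppoly :: "nat \<Rightarrow> real \<Rightarrow> real" where
  "Ppoly n x = (let m = mexp n; N = real n in
     (m+x)*(m+x+2)*(m+x+4)*(N-2-m-x)*(N-4-m-x)*(N-6-m-x)
       - pJL6 n * Lconst n powr (pJL6 n - 1))"

definition lam3 :: "nat \<Rightarrow> real" where
  "lam3 n = Inf {x. 0 < x \<and> Ppoly n x = 0}"

definition lexp :: "nat \<Rightarrow> real" where
  "lexp n = mexp n + lam3 n"

definition rlap :: "nat \<Rightarrow> (real \<Rightarrow> real) \<Rightarrow> real \<Rightarrow> real" where
  "rlap n f r = deriv (deriv f) r + (real n - 1) / r * deriv f r"

definition u_low :: "nat \<Rightarrow> real \<Rightarrow> real \<Rightarrow> real \<Rightarrow> real" where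
  "u_low n b R r = (let m = mexp n; l = lexp n; L = Lconst n in
     L * r powr (-m) - b * r powr (-l) * ln (r / R))"

definition v_low :: "nat \<Rightarrow> real \<Rightarrow> real \<Rightarrow> real \<Rightarrow> real" where
  "v_low n b R r = (let m = mexp n; l = lexp n; L = Lconst n; N = real n in
     m*(N-2-m)*L * r powr (-m-2)
     + (- l*(N-2-l) * ln (r / R) + (N-2-2*l)) * b * r powr (-l-2))"

definition w_low :: "nat \<Rightarrow> real \<Rightarrow> real \<Rightarrow> real \<Rightarrow> real" where
  "w_low n b R r = (let m = mexp n; l = lexp n; L = Lconst n; N = real n in
     m*(m+2)*(N-2-m)*(N-4-m)*L * r powr (-m-4)
     - l*(l+2)*(N-2-l)*(N-4-l)*b * r powr (-l-4) * ln (r / R)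
     + (N-2-2*l)*(l+2)*(N-4-l)*b * r powr (-l-4))"

definition u_up :: "nat \<Rightarrow> real \<Rightarrow> real \<Rightarrow> real \<Rightarrow> real \<Rightarrow> real \<Rightarrow> real" where
  "u_up n b \<beta> R c r = (let m = mexp n; l = lexp n; L = Lconst n; lg = ln (r / R) in
     L * r powr (-m) - b * r powr (-l) * lg + c * r powr (-l) * lg powr \<beta>)"

definition v_up :: "nat \<Rightarrow> real \<Rightarrow> real \<Rightarrow> real \<Rightarrow> real \<Rightarrow> real \<Rightarrow> real" where
  "v_up n b \<beta> R c r = (let m = mexp n; l = lexp n; L = Lconst n; N = real n; lg = ln (r / R) in
     m*(N-2-m)*L * r powr (-m-2)
     - (l*(N-2-l)*lg - (N-2-2*l)) * b * r powr (-l-2)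
     + (l*(N-2-l) * lg powr \<beta> - \<beta>*(N-2-2*l) * lg powr (\<beta>-1)
        + \<beta>*(1-\<beta>) * lg powr (\<beta>-2)) * c * r powr (-l-2))"

definition w_up :: "nat \<Rightarrow> real \<Rightarrow> real \<Rightarrow> real \<Rightarrow> real \<Rightarrow> real \<Rightarrow> real" where
  "w_up n b \<beta> R c r = (let m = mexp n; l = lexp n; L = Lconst n; N = real n; lg = ln (r / R) in
     m*(m+2)*(N-2-m)*(N-4-m)*L * r powr (-m-4)
     - (l+2)*(N-4-l)*(l*(N-2-l)*lg - (N-2-2*l)) * b * r powr (-l-4)
     + (l*(l+2)*(N-2-l)*(N-4-l) * lg powr \<beta>
        - \<beta>*(N-2-2*l)*(l+2)*(N-4-l) * lg powr (\<beta>-1)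
        + \<beta>*(1-\<beta>)*(l*(N-2-l) + (l+2)*(N-4-l)) * lg powr (\<beta>-2)
        + \<beta>*(1-\<beta>)*(2-\<beta>)*(N-2-2*l) * lg powr (\<beta>-3)
        - \<beta>*(1-\<beta>)*(2-\<beta>)*(3-\<beta>) * lg powr (\<beta>-4)) * c * r powr (-l-4))"

end

(*
  In the variable t = log (r / R) the radial Laplacian sends r^g phi(t) to
  r^(g-2) (g (g + n - 2) phi + (n - 2 + 2 g) phi' + phi''), which gives the first two identities
  once one knows that l = (n - 6) / 2.  That value comes from p_JL(6,n): Cardano's formula solves a
  cubic that is equivalent to the Joseph--Lundgren relation p Q(m) = Q((n - 6) / 2), where Q is
  the symbol of (-Delta)^3 on powers r^(-x); as Q is symmetric about (n - 6) / 2 and increasing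
  below it, lambda_3 = (n - 6) / 2 - m.

  For the inequality write u_up = r^(-m) (L - s) with s = r^(m-l) (b t - c t^beta), which is
  nonnegative beyond the given radius.  Then u_up^p = r^(-m-6) L Q(m) (1 - s / L)^p is at most
  r^(-m-6) (L Q(m) - p Q(m) s + O(s^2)), while
  -Delta w_up = r^(-m-6) (L Q(m) - Q(l) s + c r^(m-l) G(t)) with G(t) of order t^(beta-2) > 0.
  The linear terms agree because p Q(m) = Q(l), and the error O(t^2 r^(2(m-l))) is beaten by
  c r^(m-l) G(t) once t is large, since r^(m-l) decays exponentially in t.
*)

theory Submission
  imports Defs "HOL-Real_Asymp.Real_Asymp"
begin

lemma rlap_eqI:
  fixes f f' f'' :: "real \<Rightarrow> real"
  assumes f': "\<And>x. x > R \<Longrightarrow> (f has_real_derivative f' x) (at x)"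
    and f'': "\<And>x. x > R \<Longrightarrow> (f' has_real_derivative f'' x) (at x)"
    and r: "r > R"
  shows "rlap n f r = f'' r + (real n - 1) / r * f' r"
proof -
  have "eventually (\<lambda>x. x \<in> {R<..}) (nhds r)"
    using r by (intro eventually_nhds_in_open) auto
  then have "eventually (\<lambda>x. deriv f x = f' x) (nhds r)"
    by eventually_elim (auto intro: DERIV_imp_deriv f')
  then have "deriv (deriv f) r = deriv f' r" by (rule deriv_cong_ev) simp
  then show ?thesis
    unfolding rlap_def using DERIV_imp_deriv[OF f'[OF r]] DERIV_imp_deriv[OF f''[OF r]] by simp
qed

lemma has_real_derivative_powr_log_profile:
  fixes \<phi> \<phi>' :: "real \<Rightarrow> real"
  assumes \<phi>': "\<And>t. t > 0 \<Longrightarrow> (\<phi> has_real_derivative \<phi>' t) (at t)"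
    and R: "R > 0" and x: "x > R"
  shows "((\<lambda>r. K * r powr e + r powr g * \<phi> (ln (r / R))) has_real_derivative
     K * e * x powr (e - 1) + x powr (g - 1) * (g * \<phi> (ln (x / R)) + \<phi>' (ln (x / R)))) (at x)"
proof -
  have "((\<lambda>r. ln (r / R)) has_real_derivative 1 / x) (at x)"
    using x R by (auto intro!: derivative_eq_intros)
  with \<phi>'[of "ln (x / R)"] x R
  have "((\<lambda>r. \<phi> (ln (r / R))) has_real_derivative \<phi>' (ln (x / R)) / x) (at x)"
    using DERIV_chain2 by fastforce
  then show ?thesis
    using x R by (auto intro!: derivative_eq_intros simp: powr_diff field_simps)
qed

lemma rlap_powr_log_profile:
  fixes \<phi> \<phi>' \<phi>'' :: "real \<Rightarrow> real"
  assumes \<phi>': "\<And>t. t > 0 \<Longrightarrow> (\<phi> has_real_derivative \<phi>' t) (at t)"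
    and \<phi>'': "\<And>t. t > 0 \<Longrightarrow> (\<phi>' has_real_derivative \<phi>'' t) (at t)"
    and R: "R > 0" and r: "r > R"
  shows "rlap n (\<lambda>r. K * r powr e + r powr g * \<phi> (ln (r / R))) r =
     K * e * (e + real n - 2) * r powr (e - 2) + r powr (g - 2) *
       (g * (g + real n - 2) * \<phi> (ln (r / R)) + (real n - 2 + 2 * g) * \<phi>' (ln (r / R))
        + \<phi>'' (ln (r / R)))"
proof -
  have \<psi>': "((\<lambda>t. g * \<phi> t + \<phi>' t) has_real_derivative g * \<phi>' t + \<phi>'' t) (at t)" if "t > 0" for t
    using that by (intro DERIV_add DERIV_cmult \<phi>' \<phi>'')
  have "rlap n (\<lambda>r. K * r powr e + r powr g * \<phi> (ln (r / R))) r =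
      K * e * (e - 1) * r powr (e - 1 - 1) + r powr (g - 1 - 1) *
        ((g - 1) * (g * \<phi> (ln (r / R)) + \<phi>' (ln (r / R)))
         + (g * \<phi>' (ln (r / R)) + \<phi>'' (ln (r / R))))
      + (real n - 1) / r * (K * e * r powr (e - 1)
         + r powr (g - 1) * (g * \<phi> (ln (r / R)) + \<phi>' (ln (r / R))))"
    using has_real_derivative_powr_log_profile[OF \<phi>' R]
      has_real_derivative_powr_log_profile[OF \<psi>' R, of _ "K * e" "e - 1" "g - 1"] r
    by (intro rlap_eqI) auto
  also have "\<dots> = K * e * (e + real n - 2) * r powr (e - 2) + r powr (g - 2) *
       (g * (g + real n - 2) * \<phi> (ln (r / R)) + (real n - 2 + 2 * g) * \<phi>' (ln (r / R))
        + \<phi>'' (ln (r / R)))"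
    using r R by (simp add: powr_diff field_simps)
      (simp add: algebra_simps power2_eq_square power_numeral_reduce)
  finally show ?thesis .
qed

lemma rlap_u_up:
  assumes R: "R > 0" and r: "r > R"
  shows "- rlap n (u_up n b \<beta> R c) r = v_up n b \<beta> R c r"
proof -
  define \<phi> where "\<phi> t = c * t powr \<beta> - b * t" for t
  define \<phi>' where "\<phi>' t = c * \<beta> * t powr (\<beta> - 1) - b" for t
  define \<phi>'' where "\<phi>'' t = c * \<beta> * (\<beta> - 1) * t powr (\<beta> - 2)" for t
  have u_up: "u_up n b \<beta> R c
      = (\<lambda>r. Lconst n * r powr (- mexp n) + r powr (- lexp n) * \<phi> (ln (r / R)))"
    by (auto simp: u_up_def \<phi>_def Let_def algebra_simps)
  have d1: "(\<phi> has_real_derivative \<phi>' t) (at t)" if "t > 0" for t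
    unfolding \<phi>_def \<phi>'_def
    by (rule DERIV_cong, (rule DERIV_diff DERIV_cmult has_real_derivative_powr DERIV_ident that)+)
      simp
  moreover have d2: "(\<phi>' has_real_derivative \<phi>'' t) (at t)" if "t > 0" for t
    unfolding \<phi>'_def \<phi>''_def
    by (rule DERIV_cong, (rule DERIV_diff DERIV_cmult has_real_derivative_powr DERIV_const that)+)
      (simp add: diff_diff_eq)
  ultimately show ?thesis
    unfolding u_up using R r
    by (subst rlap_powr_log_profile[OF d1 d2])
      (auto simp: v_up_def \<phi>_def \<phi>'_def \<phi>''_def Let_def diff_diff_eq algebra_simps)
qed

text \<open>At the exponent \<open>-l - 2\<close> of \<open>v_up\<close>, the coefficient \<open>n - 6 - 2 l\<close> of the first
  logarithmic derivative in \<open>rlap_powr_log_profile\<close> vanishes when \<open>n = 2 l + 6\<close>;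
  \<open>w_up\<close> is written in that form.\<close>

lemma rlap_v_up:
  assumes R: "R > 0" and r: "r > R" and nl: "real n = 2 * lexp n + 6"
  shows "- rlap n (v_up n b \<beta> R c) r = w_up n b \<beta> R c r"
proof -
  define l where "l = lexp n"
  define A where "A = l * (real n - 2 - l)"
  define E where "E = real n - 2 - 2 * l"
  define \<phi> where "\<phi> t = b * E - b * A * t + c * A * t powr \<beta> - c * \<beta> * E * t powr (\<beta> - 1)
    + c * \<beta> * (1 - \<beta>) * t powr (\<beta> - 2)" for t
  define \<phi>' where "\<phi>' t = - (b * A) + c * A * \<beta> * t powr (\<beta> - 1)
    - c * \<beta> * E * (\<beta> - 1) * t powr (\<beta> - 2)
    + c * \<beta> * (1 - \<beta>) * (\<beta> - 2) * t powr (\<beta> - 3)" for t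
  define \<phi>'' where "\<phi>'' t = c * A * \<beta> * (\<beta> - 1) * t powr (\<beta> - 2)
    - c * \<beta> * E * (\<beta> - 1) * (\<beta> - 2) * t powr (\<beta> - 3)
    + c * \<beta> * (1 - \<beta>) * (\<beta> - 2) * (\<beta> - 3) * t powr (\<beta> - 4)" for t
  have v_up: "v_up n b \<beta> R c = (\<lambda>r. mexp n * (real n - 2 - mexp n) * Lconst n * r powr (- mexp n - 2)
      + r powr (- l - 2) * \<phi> (ln (r / R)))"
    by (auto simp: v_up_def \<phi>_def A_def E_def l_def Let_def algebra_simps)
  have d1: "(\<phi> has_real_derivative \<phi>' t) (at t)" if "t > 0" for t
    unfolding \<phi>_def \<phi>'_def
    by (rule DERIV_cong, (rule DERIV_add DERIV_diff DERIV_cmult has_real_derivative_powr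
          DERIV_ident DERIV_const DERIV_minus that)+) (simp add: diff_diff_eq algebra_simps)
  moreover have d2: "(\<phi>' has_real_derivative \<phi>'' t) (at t)" if "t > 0" for t
    unfolding \<phi>'_def \<phi>''_def
    by (rule DERIV_cong, (rule DERIV_add DERIV_diff DERIV_cmult has_real_derivative_powr
          DERIV_ident DERIV_const DERIV_minus that)+) (simp add: diff_diff_eq algebra_simps)
  moreover have "real n = 2 * l + 6" using nl by (simp add: l_def)
  ultimately show ?thesis
    unfolding v_up using R r
    by (subst rlap_powr_log_profile[OF d1 d2])
      (auto simp: w_up_def Let_def \<phi>_def \<phi>'_def \<phi>''_def A_def E_def l_def[symmetric]
        diff_diff_eq algebra_simps)
qed

text \<open>\<open>(-\<Delta>)\<^sup>3 r\<^sup>-\<^sup>x = triharmonic_symbol n x * r\<^sup>-\<^sup>x\<^sup>-\<^sup>6\<close> in \<open>\<real>\<^sup>n\<close>.\<close>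

definition triharmonic_symbol :: "real \<Rightarrow> real \<Rightarrow> real" where
  "triharmonic_symbol N x = x * (x + 2) * (x + 4) * (N - 2 - x) * (N - 4 - x) * (N - 6 - x)"

definition w_up_remainder :: "real \<Rightarrow> real \<Rightarrow> real \<Rightarrow> real" where
  "w_up_remainder l \<beta> t = (let A = l * (l + 4); B = (l + 2)^2 in
     \<beta> * (1 - \<beta>) * (A^2 + (2 * A + 16) * B) * t powr (\<beta> - 2)
     - \<beta> * (1 - \<beta>) * (2 - \<beta>) * (3 - \<beta>) * (2 * A + 16 + B) * t powr (\<beta> - 4)
     + \<beta> * (1 - \<beta>) * (2 - \<beta>) * (3 - \<beta>) * (4 - \<beta>) * (5 - \<beta>) * t powr (\<beta> - 6))"

lemma rlap_w_up:
  assumes R: "R > 0" and r: "r > R" and nl: "real n = 2 * lexp n + 6"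
  shows "- rlap n (w_up n b \<beta> R c) r =
    triharmonic_symbol (real n) (mexp n) * Lconst n * r powr (- mexp n - 6)
    + r powr (- lexp n - 6)
      * (triharmonic_symbol (real n) (lexp n) * (c * ln (r / R) powr \<beta> - b * ln (r / R))
      + c * w_up_remainder (lexp n) \<beta> (ln (r / R)))"
proof -
  define l where "l = lexp n"
  define A where "A = l * (real n - 2 - l)"
  define B where "B = (l + 2) * (real n - 4 - l)"
  define E where "E = real n - 2 - 2 * l"
  define \<phi> where "\<phi> t = b * B * E - b * B * A * t + c * A * B * t powr \<beta> - c * \<beta> * E * B * t powr (\<beta> - 1)
      + c * \<beta> * (1 - \<beta>) * (A + B) * t powr (\<beta> - 2) + c * \<beta> * (1 - \<beta>) * (2 - \<beta>) * E * t powr (\<beta> - 3)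
      - c * \<beta> * (1 - \<beta>) * (2 - \<beta>) * (3 - \<beta>) * t powr (\<beta> - 4)" for t
  define \<phi>' where "\<phi>' t = - (b * B * A) + c * A * B * \<beta> * t powr (\<beta> - 1)
      - c * \<beta> * E * B * (\<beta> - 1) * t powr (\<beta> - 2)
      + c * \<beta> * (1 - \<beta>) * (A + B) * (\<beta> - 2) * t powr (\<beta> - 3)
      + c * \<beta> * (1 - \<beta>) * (2 - \<beta>) * E * (\<beta> - 3) * t powr (\<beta> - 4)
      - c * \<beta> * (1 - \<beta>) * (2 - \<beta>) * (3 - \<beta>) * (\<beta> - 4) * t powr (\<beta> - 5)" for t
  define \<phi>'' where "\<phi>'' t = c * A * B * \<beta> * (\<beta> - 1) * t powr (\<beta> - 2)
      - c * \<beta> * E * B * (\<beta> - 1) * (\<beta> - 2) * t powr (\<beta> - 3)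
      + c * \<beta> * (1 - \<beta>) * (A + B) * (\<beta> - 2) * (\<beta> - 3) * t powr (\<beta> - 4)
      + c * \<beta> * (1 - \<beta>) * (2 - \<beta>) * E * (\<beta> - 3) * (\<beta> - 4) * t powr (\<beta> - 5)
      - c * \<beta> * (1 - \<beta>) * (2 - \<beta>) * (3 - \<beta>) * (\<beta> - 4) * (\<beta> - 5) * t powr (\<beta> - 6)" for t
  have w_up: "w_up n b \<beta> R c = (\<lambda>r. mexp n * (mexp n + 2) * (real n - 2 - mexp n) * (real n - 4 - mexp n)
      * Lconst n * r powr (- mexp n - 4) + r powr (- l - 4) * \<phi> (ln (r / R)))"
    by (auto simp: w_up_def \<phi>_def A_def B_def E_def l_def Let_def algebra_simps)
  have d1: "(\<phi> has_real_derivative \<phi>' t) (at t)" if "t > 0" for t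
    unfolding \<phi>_def \<phi>'_def
    by (rule DERIV_cong, (rule DERIV_add DERIV_diff DERIV_cmult has_real_derivative_powr
          DERIV_ident DERIV_const DERIV_minus that)+) (simp add: diff_diff_eq algebra_simps)
  moreover have d2: "(\<phi>' has_real_derivative \<phi>'' t) (at t)" if "t > 0" for t
    unfolding \<phi>'_def \<phi>''_def
    by (rule DERIV_cong, (rule DERIV_add DERIV_diff DERIV_cmult has_real_derivative_powr
          DERIV_ident DERIV_const DERIV_minus that)+) (simp add: diff_diff_eq algebra_simps)
  moreover have "real n = 2 * l + 6" using nl by (simp add: l_def)
  ultimately show ?thesis
    unfolding w_up using R r
    by (subst rlap_powr_log_profile[OF d1 d2])
      (auto simp: \<phi>_def \<phi>'_def \<phi>''_def A_def B_def E_def l_def[symmetric] triharmonic_symbol_def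
        w_up_remainder_def Let_def diff_diff_eq algebra_simps power2_eq_square)
qed

text \<open>The nested radicals in \<open>pJL6\<close> are Cardano's formula for the real root of \<open>jl_cubic N\<close>.\<close>

definition jl_A :: "real \<Rightarrow> real" where
  "jl_A N = 192 * N^2 + 256"

definition jl_B :: "real \<Rightarrow> real" where
  "jl_B N = -27*N^6 + 324*N^5 - 756*N^4 - 2592*N^3 + 25776*N^2 + 5184*N - 23744"

definition jl_cubic :: "real \<Rightarrow> real \<Rightarrow> real" where
  "jl_cubic N w = w^3 - 3 * jl_A N * w - jl_B N"

lemma cardano_root:
  fixes K0 K1 A :: real
  assumes "(K0 + K1) * (K0 - K1) = A^3"
  shows "(root 3 (K0 + K1) + root 3 (K0 - K1))^3 - 3 * A * (root 3 (K0 + K1) + root 3 (K0 - K1))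
    - 2 * K0 = 0"
proof -
  define u v where "u = root 3 (K0 + K1)" and "v = root 3 (K0 - K1)"
  have "u^3 = K0 + K1" "v^3 = K0 - K1"
    unfolding u_def v_def by (simp_all add: odd_real_root_pow)
  moreover have "u * v = A"
    unfolding u_def v_def real_root_mult[symmetric] assms by (simp add: odd_real_root_power_cancel)
  ultimately show ?thesis
    unfolding u_def[symmetric] v_def[symmetric] by algebra
qed

lemma cubic_less_iff:
  fixes A w y :: real
  assumes "4 * A < y^2"
  shows "w^3 - 3 * A * w < y^3 - 3 * A * y \<longleftrightarrow> w < y"
proof -
  have "w^3 - 3 * A * w - (y^3 - 3 * A * y) = (w - y) * ((w + y / 2)^2 + 3 / 4 * y^2 - 3 * A)"
    by (simp add: algebra_simps power2_eq_square power3_eq_cube)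
  moreover have "(w + y / 2)^2 + 3 / 4 * y^2 - 3 * A > 0"
    using assms zero_le_power2[of "w + y / 2"] by linarith
  ultimately show ?thesis
    by (smt (verit) mult_pos_pos mult_neg_pos)
qed

text \<open>The next three facts hold because, written in \<open>k = N - 15\<close>, the polynomials have
  positive coefficients.\<close>

lemma jl_discriminant_pos:
  assumes "N \<ge> 15"
  shows "4 * jl_A N ^ 3 < jl_B N ^ 2"
proof -
  define k where "k = N - 15"
  have "k \<ge> 0" and N: "N = k + 15" using assms by (simp_all add: k_def)
  have "jl_B N ^ 2 - 4 * jl_A N ^ 3 = 10214160759983817 + k*(10585461850409628 + k*(4894534148604354
      + k*(1347076448060364 + k*(246965545626615 + k*(31863611628216 + k*(2971699904988
      + k*(202081266936 + k*(9951685191 + k*(346289580 + k*(8084610 + k*(113724 + k*729)))))))))))"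
    unfolding jl_A_def jl_B_def N
    by (simp add: algebra_simps power2_eq_square power3_eq_cube power4_eq_xxxx power_numeral_reduce)
  also have "\<dots> > 0" using \<open>k \<ge> 0\<close> by (intro add_pos_nonneg mult_nonneg_nonneg; simp)+
  finally show ?thesis by simp
qed

lemma jl_cubic_lower:
  assumes "N \<ge> 15"
  shows "jl_cubic N (- 3 * N^2 - 32) < 0"
proof -
  define k where "k = N - 15"
  have "k \<ge> 0" and N: "N = k + 15" using assms by (simp_all add: k_def)
  have "- jl_cubic N (- 3 * N^2 - 32) =
      158546808 + k*(58825764 + k*(8645616 + k*(629208 + k*(22680 + k*324))))"
    unfolding jl_cubic_def jl_A_def jl_B_def N
    by (simp add: algebra_simps power2_eq_square power3_eq_cube power4_eq_xxxx power_numeral_reduce)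
  also have "\<dots> > 0" using \<open>k \<ge> 0\<close> by (intro add_pos_nonneg mult_nonneg_nonneg; simp)+
  finally show ?thesis by simp
qed

lemma jl_cubic_upper:
  assumes "N \<ge> 15"
  shows "jl_cubic N (160 - 48 * N) > 0"
proof -
  define k where "k = N - 15"
  have "k \<ge> 0" and N: "N = k + 15" using assms by (simp_all add: k_def)
  have "jl_cubic N (160 - 48 * N) =
      66339 + k*(22959450 + k*(7960869 + k*(1058508 + k*(67581 + k*(2106 + k*27)))))"
    unfolding jl_cubic_def jl_A_def jl_B_def N
    by (simp add: algebra_simps power2_eq_square power3_eq_cube power4_eq_xxxx power_numeral_reduce)
  also have "\<dots> > 0" using \<open>k \<ge> 0\<close> by (intro add_pos_nonneg mult_nonneg_nonneg; simp)+
  finally show ?thesis .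
qed

lemma jl_cubic_root_bounds:
  assumes N: "N \<ge> 15" and z: "jl_cubic N z = 0"
  shows "- 3 * N^2 - 32 < z" "z < 160 - 48 * N"
proof -
  have "4 * jl_A N < (- 3 * N^2 - 32)^2"
  proof -
    have "8 * 8 < N * N" using N by (intro mult_strict_mono) auto
    then have "N^2 * 64 < N^2 * N^2"
      using N by (intro mult_strict_left_mono) (auto simp: power2_eq_square)
    then show ?thesis by (simp add: jl_A_def algebra_simps power2_eq_square)
  qed
  then have "\<not> z < - 3 * N^2 - 32"
    using jl_cubic_lower[OF N] z cubic_less_iff[of "jl_A N" "- 3 * N^2 - 32" z]
    by (simp add: jl_cubic_def)
  moreover have "z \<noteq> - 3 * N^2 - 32" using jl_cubic_lower[OF N] z by auto
  ultimately show "- 3 * N^2 - 32 < z" by linarith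
  have "4 * jl_A N < (160 - 48 * N)^2"
  proof -
    have "0 < 1536 * ((N - 2) * (N - 8))" using N by (intro mult_pos_pos) auto
    then show ?thesis by (simp add: jl_A_def algebra_simps power2_eq_square)
  qed
  then show "z < 160 - 48 * N"
    using jl_cubic_upper[OF N] z cubic_less_iff[of "jl_A N" "160 - 48 * N" z]
    by (simp add: jl_cubic_def)
qed

lemma pJL6_cardano:
  assumes "n \<ge> 15"
  obtains z where "jl_cubic (real n) z = 0"
    "pJL6 n = ((real n + 4) * sqrt 3 - sqrt (z + 3 * real n^2 + 32))
      / ((real n - 8) * sqrt 3 - sqrt (z + 3 * real n^2 + 32))"
proof -
  define N where "N = real n"
  define K0 where "K0 = jl_B N / 2"
  define K1 where "K1 = sqrt ((2 * K0)^2 - 4 * jl_A N ^ 3) / 2"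
  define z where "z = root 3 (K0 + K1) + root 3 (K0 - K1)"
  have "4 * jl_A N ^ 3 < (2 * K0)^2"
    using jl_discriminant_pos[of N] assms by (simp add: K0_def N_def)
  then have "K1^2 = K0^2 - jl_A N ^ 3"
    by (simp add: K1_def power_divide power_mult_distrib)
  then have "(K0 + K1) * (K0 - K1) = jl_A N ^ 3"
    by (simp add: algebra_simps power2_eq_square)
  then have "jl_cubic N z = 0"
    using cardano_root[of K0 K1 "jl_A N"] by (simp add: jl_cubic_def z_def K0_def)
  moreover have "pJL6 n = ((N + 4) * sqrt 3 - sqrt (z + 3 * N^2 + 32))
      / ((N - 8) * sqrt 3 - sqrt (z + 3 * N^2 + 32))"
    unfolding pJL6_def Let_def N_def[symmetric] jl_B_def[symmetric] jl_A_def[symmetric]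
      K0_def[symmetric] K1_def[symmetric] z_def[symmetric] by (simp add: algebra_simps)
  ultimately show ?thesis using that by (simp add: N_def)
qed

lemma jl_identity:
  fixes l y :: real
  shows "3456 * ((l - 1 - y + 6) * triharmonic_symbol (2 * l + 6) (l - 1 - y)
      - (l - 1 - y) * triharmonic_symbol (2 * l + 6) l)
    = (2 * y - 2 * l + 2) * jl_cubic (2 * l + 6) (12 * y^2 - 3 * (2 * l + 6)^2 - 32)"
  unfolding triharmonic_symbol_def jl_cubic_def jl_A_def jl_B_def by algebra

text \<open>With \<open>\<sigma> = sqrt (z + 3 N\<^sup>2 + 32) / (2 sqrt 3)\<close> one gets \<open>mexp n = (N - 8) / 2 - \<sigma>\<close>,
  and the cubic equation for \<open>z\<close> becomes the Joseph--Lundgren condition by \<open>jl_identity\<close>.\<close>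

lemma pJL6_characterization:
  assumes n: "n \<ge> 15"
  shows "0 < mexp n" "mexp n < (real n - 8) / 2" "pJL6 n = 1 + 6 / mexp n"
    "pJL6 n * triharmonic_symbol (real n) (mexp n) = triharmonic_symbol (real n) ((real n - 6) / 2)"
proof -
  define N where "N = real n"
  have N: "N \<ge> 15" using n by (simp add: N_def)
  obtain z where z: "jl_cubic N z = 0"
    and p: "pJL6 n = ((N + 4) * sqrt 3 - sqrt (z + 3 * N^2 + 32))
      / ((N - 8) * sqrt 3 - sqrt (z + 3 * N^2 + 32))"
    using pJL6_cardano[OF n] by (auto simp: N_def)
  define S where "S = sqrt (z + 3 * N^2 + 32)"
  define \<sigma> where "\<sigma> = S / (2 * sqrt 3)"
  define m where "m = (N - 8) / 2 - \<sigma>"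
  have S2: "S^2 = z + 3 * N^2 + 32"
    using jl_cubic_root_bounds[OF N z] by (simp add: S_def)
  have "S < (N - 8) * sqrt 3"
  proof (rule power2_less_imp_less)
    show "S^2 < ((N - 8) * sqrt 3)^2"
      unfolding S2 power_mult_distrib using jl_cubic_root_bounds[OF N z]
      by (simp add: algebra_simps power2_eq_square)
  qed (use N in simp)
  then have m_pos: "0 < m" by (simp add: m_def \<sigma>_def field_simps)
  have "\<sigma> > 0" using jl_cubic_root_bounds[OF N z] by (simp add: \<sigma>_def S_def)
  then have m_less: "m < (N - 8) / 2" unfolding m_def by linarith
  have "(N - 8) * sqrt 3 - S = 2 * sqrt 3 * m" by (simp add: m_def \<sigma>_def algebra_simps)
  then have p_m: "pJL6 n = 1 + 6 / m"
    using m_pos unfolding p S_def[symmetric] by (simp add: field_simps)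
  then have mexp: "mexp n = m" using m_pos by (simp add: mexp_def)
  have "z = 12 * \<sigma>^2 - 3 * N^2 - 32"
    using S2 by (simp add: \<sigma>_def power_divide power_mult_distrib field_simps)
  moreover have N_eq: "2 * ((N - 6) / 2) + 6 = N" by (simp add: divide_simps)
  ultimately have
    "jl_cubic (2 * ((N - 6) / 2) + 6) (12 * \<sigma>^2 - 3 * (2 * ((N - 6) / 2) + 6)^2 - 32) = 0"
    using z unfolding N_eq by simp
  moreover have "(N - 6) / 2 - 1 - \<sigma> = m" by (simp add: m_def divide_simps)
  ultimately have "(m + 6) * triharmonic_symbol N m = m * triharmonic_symbol N ((N - 6) / 2)"
    using jl_identity[of "(N - 6) / 2" \<sigma>] unfolding N_eq by simp
  then have "pJL6 n * triharmonic_symbol N m = triharmonic_symbol N ((N - 6) / 2)"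
    using m_pos unfolding p_m by (simp add: field_simps)
  with m_pos m_less p_m show "0 < mexp n" "mexp n < (real n - 8) / 2" "pJL6 n = 1 + 6 / mexp n"
    "pJL6 n * triharmonic_symbol (real n) (mexp n) = triharmonic_symbol (real n) ((real n - 6) / 2)"
    by (simp_all add: mexp N_def)
qed

lemma triharmonic_symbol_centered:
  "triharmonic_symbol (2 * a + 6) (a - w) = (a^2 - w^2) * ((a + 2)^2 - w^2) * ((a + 4)^2 - w^2)"
  by (simp add: triharmonic_symbol_def algebra_simps power2_eq_square)

lemma triharmonic_symbol_less:
  fixes a y :: real
  assumes "0 < y" "y < a"
  shows "triharmonic_symbol (2 * a + 6) y < triharmonic_symbol (2 * a + 6) a"
proof -
  have "0 < (a - y)^2" "(a - y)^2 < a^2" "(a - y)^2 < (a + 2)^2" "(a - y)^2 < (a + 4)^2"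
    using assms by (auto intro!: power_strict_mono)
  then have "(a^2 - (a - y)^2) * ((a + 2)^2 - (a - y)^2) * ((a + 4)^2 - (a - y)^2)
      < a^2 * (a + 2)^2 * (a + 4)^2"
    by (intro mult_strict_mono mult_pos_pos) auto
  then show ?thesis
    using triharmonic_symbol_centered[of a "a - y"] triharmonic_symbol_centered[of a 0] by simp
qed

lemma triharmonic_symbol_mexp_pos:
  assumes "n \<ge> 15"
  shows "triharmonic_symbol (real n) (mexp n) > 0"
  using pJL6_characterization[OF assms]
  by (auto simp: triharmonic_symbol_def intro!: mult_pos_pos)

lemma Lconst_pos_powr:
  assumes "n \<ge> 15"
  shows "Lconst n > 0" "Lconst n powr (pJL6 n - 1) = triharmonic_symbol (real n) (mexp n)"
proof -
  have "pJL6 n > 1" using pJL6_characterization[OF assms] by simp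
  moreover have "Lconst n = triharmonic_symbol (real n) (mexp n) powr (1 / (pJL6 n - 1))"
    by (simp add: Lconst_def triharmonic_symbol_def Let_def)
  ultimately show "Lconst n > 0" "Lconst n powr (pJL6 n - 1) = triharmonic_symbol (real n) (mexp n)"
    using triharmonic_symbol_mexp_pos[OF assms] by (simp_all add: powr_powr)
qed

text \<open>Since \<open>triharmonic_symbol n\<close> is symmetric about \<open>(n - 6) / 2\<close> and increases up to it,
  the smallest positive root of \<open>Ppoly n\<close> puts \<open>l\<close> exactly at the centre.\<close>

lemma lexp_eq:
  assumes n: "n \<ge> 15"
  shows "lexp n = (real n - 6) / 2"
proof -
  define a where "a = (real n - 6) / 2"
  have N: "real n = 2 * a + 6" by (simp add: a_def divide_simps)
  have m: "0 < mexp n" "mexp n < a - 1"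
    using pJL6_characterization[OF n] by (simp_all add: a_def divide_simps)
  have Ppoly: "Ppoly n x
      = triharmonic_symbol (real n) (mexp n + x) - triharmonic_symbol (real n) a" for x
    using pJL6_characterization(4)[OF n] Lconst_pos_powr(2)[OF n]
    by (simp add: Ppoly_def triharmonic_symbol_def a_def Let_def diff_diff_eq add.assoc)
  have "lam3 n = a - mexp n"
    unfolding lam3_def
  proof (rule cInf_eq_minimum)
    show "a - mexp n \<in> {x. 0 < x \<and> Ppoly n x = 0}" using m by (simp add: Ppoly)
  next
    fix x assume x: "x \<in> {x. 0 < x \<and> Ppoly n x = 0}"
    show "a - mexp n \<le> x"
    proof (rule ccontr)
      assume "\<not> a - mexp n \<le> x"
      then have "triharmonic_symbol (real n) (mexp n + x) < triharmonic_symbol (real n) a"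
        unfolding N using x m by (intro triharmonic_symbol_less) auto
      then show False using x by (simp add: Ppoly)
    qed
  qed
  then show ?thesis by (simp add: lexp_def a_def)
qed

lemma exp_neg_le_quadratic:
  fixes y :: real
  assumes "0 \<le> y"
  shows "exp (- y) \<le> 1 - y + y^2 / 2"
proof -
  define g where "g x = 1 - x + x^2 / 2 - exp (- x)" for x :: real
  have "g 0 \<le> g y"
  proof (rule DERIV_nonneg_imp_nondecreasing[OF assms])
    fix x :: real assume "0 \<le> x"
    moreover have "(g has_real_derivative - 1 + x + exp (- x)) (at x)"
      unfolding g_def by (auto intro!: derivative_eq_intros)
    ultimately show "\<exists>d. (g has_real_derivative d) (at x) \<and> d \<ge> 0"
      using exp_ge_add_one_self[of "- x"] by auto
  qed
  then show ?thesis by (simp add: g_def)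
qed

lemma one_minus_powr_le:
  fixes x p :: real
  assumes "0 \<le> x" "x < 1" "0 \<le> p"
  shows "(1 - x) powr p \<le> 1 - p * x + (p * x)^2 / 2"
proof -
  have "ln (1 - x) \<le> - x"
    using ln_le_minus_one[of "1 - x"] assms by simp
  then have "p * ln (1 - x) \<le> - (p * x)"
    using mult_left_mono[of _ _ p] assms by fastforce
  then have "(1 - x) powr p \<le> exp (- (p * x))"
    using assms by (simp add: powr_def)
  also have "\<dots> \<le> 1 - p * x + (p * x)^2 / 2"
    using assms by (intro exp_neg_le_quadratic) simp
  finally show ?thesis .
qed

lemma mult_one_minus_powr_le:
  fixes L Q p s E :: real
  assumes "L > 0" "Q \<ge> 0" "p \<ge> 0" "0 \<le> s" "s < L" "Q * p^2 * s^2 \<le> 2 * L * E"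
  shows "Q * L * (1 - s / L) powr p \<le> Q * L - p * Q * s + E"
proof -
  have "Q * L * (1 - s / L) powr p \<le> Q * L * (1 - p * (s / L) + (p * (s / L))^2 / 2)"
    using assms by (intro mult_left_mono one_minus_powr_le) auto
  also have "\<dots> = Q * L - p * Q * s + Q * p^2 * s^2 / (2 * L)"
    using assms by (simp add: field_simps power2_eq_square)
  also have "\<dots> \<le> Q * L - p * Q * s + E"
    using assms by (simp add: field_simps)
  finally show ?thesis .
qed

lemma less_powr_inverse:
  fixes a x y :: real
  assumes "0 < a" "0 \<le> x" "x powr a < y"
  shows "x < y powr (1 / a)"
proof -
  have "(x powr a) powr (1 / a) < y powr (1 / a)"
    using assms by (intro powr_less_mono2) auto
  then show ?thesis using assms by (simp add: powr_powr)
qed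

lemma mult_powr_less_of_gt:
  fixes b c \<beta> t :: real
  assumes "0 < b" "0 \<le> c" "\<beta> < 1" and t: "(c / b) powr (1 / (1 - \<beta>)) < t"
  shows "c * t powr \<beta> < b * t"
proof -
  have "t > 0" using t by (smt (verit) powr_ge_zero)
  have "c / b = ((c / b) powr (1 / (1 - \<beta>))) powr (1 - \<beta>)"
    using assms by (simp add: powr_powr)
  also have "\<dots> < t powr (1 - \<beta>)"
    using assms by (intro powr_less_mono2) auto
  finally have "c * t powr \<beta> < b * t powr (1 - \<beta>) * t powr \<beta>"
    using assms \<open>t > 0\<close> by (simp add: field_simps)
  also have "\<dots> = b * t"
    using \<open>t > 0\<close> by (simp flip: powr_add)
  finally show ?thesis .
qed

lemma w_up_remainder_lower_bound:
  assumes \<beta>: "0 < \<beta>" "\<beta> < 1" and l: "l > 0"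
  obtains \<kappa> where "\<kappa> > 0" "eventually (\<lambda>t. \<kappa> / t^2 \<le> w_up_remainder l \<beta> t) at_top"
proof -
  define A B where "A = l * (l + 4)" and "B = (l + 2)^2"
  define k2 where "k2 = \<beta> * (1 - \<beta>) * (A^2 + (2 * A + 16) * B)"
  define k4 where "k4 = \<beta> * (1 - \<beta>) * (2 - \<beta>) * (3 - \<beta>) * (2 * A + 16 + B)"
  define k6 where "k6 = \<beta> * (1 - \<beta>) * (2 - \<beta>) * (3 - \<beta>) * (4 - \<beta>) * (5 - \<beta>)"
  have "A > 0" "B > 0" using l by (simp_all add: A_def B_def)
  then have k2: "k2 > 0" and k4: "k4 \<ge> 0" and k6: "k6 \<ge> 0"
    using \<beta> by (auto simp: k2_def k4_def k6_def intro!: mult_pos_pos add_pos_pos mult_nonneg_nonneg)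
  have "eventually (\<lambda>t. k2 / 2 / t^2 \<le> w_up_remainder l \<beta> t) at_top"
    using eventually_ge_at_top[of "max 1 (2 * k4 / k2)"]
  proof eventually_elim
    case (elim t)
    then have t: "1 \<le> t" "2 * k4 / k2 \<le> t^2"
      by (auto simp: power2_eq_square intro: order_trans[OF _ mult_right_mono[of 1 t t]])
    have "k4 * t powr (\<beta> - 4) = k4 / t^2 * t powr (\<beta> - 2)"
      using t by (simp add: powr_diff power2_eq_square power4_eq_xxxx powr_numeral)
    also have "\<dots> \<le> k2 / 2 * t powr (\<beta> - 2)"
      using t k2 by (intro mult_right_mono) (auto simp: field_simps)
    finally have "k2 / 2 * t powr (\<beta> - 2) \<le> w_up_remainder l \<beta> t"
      using mult_nonneg_nonneg[OF k6 powr_ge_zero[of t "\<beta> - 6"]]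
      by (simp add: w_up_remainder_def A_def[symmetric] B_def[symmetric]
          k2_def[symmetric] k4_def[symmetric] k6_def[symmetric] Let_def)
    moreover have "1 / t^2 \<le> t powr (\<beta> - 2)"
      using t \<beta> by (simp add: powr_diff powr_numeral divide_right_mono ge_one_powr_ge_zero)
    ultimately show ?case
      using mult_left_mono[of "1 / t^2" "t powr (\<beta> - 2)" "k2 / 2"] k2 by simp
  qed
  with k2 show thesis by (intro that[of "k2 / 2"]) auto
qed

lemma eventually_supersolution_conditions:
  assumes n: "n \<ge> 15" and b: "b > 0" and \<beta>: "0 < \<beta>" "\<beta> < 1" and R: "R > 0"
  shows "eventually (\<lambda>t. 1 \<le> t
    \<and> b * t * (R * exp t) powr (mexp n - lexp n) < Lconst n
    \<and> triharmonic_symbol (real n) (mexp n) * pJL6 n ^ 2 * b^2 * t^2 * (R * exp t) powr (mexp n - lexp n)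
      \<le> 2 * Lconst n * w_up_remainder (lexp n) \<beta> t) at_top"
proof -
  define \<delta> where "\<delta> = lexp n - mexp n"
  define C where "C = triharmonic_symbol (real n) (mexp n) * pJL6 n ^ 2 * b^2"
  define L where "L = Lconst n"
  have \<delta>: "\<delta> > 0" using pJL6_characterization[OF n] lexp_eq[OF n] by (simp add: \<delta>_def)
  have "pJL6 n > 1" using pJL6_characterization(1,3)[OF n] by simp
  then have C: "C > 0" using triharmonic_symbol_mexp_pos[OF n] b by (simp add: C_def)
  have L: "L > 0" using Lconst_pos_powr[OF n] by (simp add: L_def)
  obtain \<kappa> where \<kappa>: "\<kappa> > 0" and rem: "eventually (\<lambda>t. \<kappa> / t^2 \<le> w_up_remainder (lexp n) \<beta> t) at_top"
    using w_up_remainder_lower_bound[OF \<beta>, of "lexp n"] lexp_eq[OF n] n by auto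
  have X: "(R * exp t) powr (mexp n - lexp n) = R powr (- \<delta>) * exp (- \<delta> * t)" for t
    using R by (simp add: \<delta>_def powr_mult) (simp add: powr_def algebra_simps)
  have "((\<lambda>t. R powr (- \<delta>) * t^4 * exp (- \<delta> * t)) \<longlongrightarrow> 0) at_top"
    using \<delta> by real_asymp
  then have "eventually (\<lambda>t. R powr (- \<delta>) * t^4 * exp (- \<delta> * t) < min (L / b) (2 * L * \<kappa> / C)) at_top"
    using L b \<kappa> C by (intro order_tendstoD(2)) auto
  with rem eventually_ge_at_top[of 1] show ?thesis
    unfolding X C_def[symmetric] L_def[symmetric]
  proof eventually_elim
    case (elim t)
    define Y where "Y = R powr (- \<delta>) * exp (- \<delta> * t)"
    have "t \<le> t^4" "Y > 0" using elim R by (simp_all add: Y_def power_increasing[of 1 4 t, simplified])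
    then have "b * t * Y \<le> b * (t^4 * Y)" using b by (simp add: mult_right_mono)
    also have "\<dots> < L" using elim b by (simp add: Y_def field_simps)
    finally have "b * t * Y < L" .
    moreover have "C * t^2 * Y * t^2 \<le> 2 * L * \<kappa>"
      using elim C by (simp add: Y_def field_simps power2_eq_square power4_eq_xxxx)
    then have "C * t^2 * Y \<le> 2 * L * (\<kappa> / t^2)"
      using elim by (simp add: field_simps)
    then have "C * t^2 * Y \<le> 2 * L * w_up_remainder (lexp n) \<beta> t"
      using elim L by (smt (verit) mult_left_mono)
    ultimately show ?case using elim by (simp add: Y_def)
  qed
qed

lemma u_up_powr_eq:
  fixes n :: nat and b \<beta> R c r :: real
  defines "s \<equiv> r powr (mexp n - lexp n) * (b * ln (r / R) - c * ln (r / R) powr \<beta>)"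
  assumes n: "n \<ge> 15" and r: "r > 0" and small: "s < Lconst n"
  shows "u_up n b \<beta> R c r powr pJL6 n = r powr (- mexp n - 6)
    * (triharmonic_symbol (real n) (mexp n) * Lconst n * (1 - s / Lconst n) powr pJL6 n)"
proof -
  define m L p where "m = mexp n" and "L = Lconst n" and "p = pJL6 n"
  have L: "L > 0" and LQ: "L powr (p - 1) = triharmonic_symbol (real n) m"
    using Lconst_pos_powr[OF n] by (simp_all add: L_def p_def m_def)
  have mp: "m * p = m + 6" using pJL6_characterization(1,3)[OF n] by (simp add: p_def m_def field_simps)
  have "u_up n b \<beta> R c r = r powr (- m) * (L * (1 - s / L))"
    using L r by (simp add: u_up_def Let_def s_def m_def L_def field_simps flip: powr_add)
  also have "\<dots> powr p = (r powr (- m)) powr p * (L powr p * (1 - s / L) powr p)"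
    using L small by (simp add: powr_mult L_def)
  also have "(r powr (- m)) powr p = r powr (- m - 6)"
    using mp by (simp add: powr_powr)
  also have "L powr p = triharmonic_symbol (real n) m * L"
    using L LQ powr_add[of L 1 "p - 1"] by simp
  finally show ?thesis by (simp add: m_def L_def p_def mult.assoc)
qed

lemma rlap_w_up_eq:
  fixes n :: nat and b \<beta> R c r :: real
  defines "s \<equiv> r powr (mexp n - lexp n) * (b * ln (r / R) - c * ln (r / R) powr \<beta>)"
  assumes n: "n \<ge> 15" and R: "R > 0" and r: "r > R"
  shows "- rlap n (w_up n b \<beta> R c) r = r powr (- mexp n - 6)
    * (triharmonic_symbol (real n) (mexp n) * Lconst n
       - pJL6 n * triharmonic_symbol (real n) (mexp n) * s
       + c * r powr (mexp n - lexp n) * w_up_remainder (lexp n) \<beta> (ln (r / R)))"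
proof -
  have "pJL6 n * triharmonic_symbol (real n) (mexp n) = triharmonic_symbol (real n) (lexp n)"
    unfolding lexp_eq[OF n] by (rule pJL6_characterization(4)[OF n])
  moreover have "real n = 2 * lexp n + 6" using lexp_eq[OF n] by simp
  moreover have "r powr (- lexp n - 6) = r powr (- mexp n - 6) * r powr (mexp n - lexp n)"
    by (simp add: algebra_simps flip: powr_add)
  ultimately show ?thesis
    using rlap_w_up[OF R r, where n = n and b = b and \<beta> = \<beta> and c = c]
    by (simp add: s_def algebra_simps)
qed

lemma u_up_powr_le_rlap_w_up:
  assumes n: "n \<ge> 15" and R: "R > 0" and r: "r > R" and c: "c \<ge> 1"
    and sign: "c * ln (r / R) powr \<beta> \<le> b * ln (r / R)"
    and small: "b * ln (r / R) * r powr (mexp n - lexp n) < Lconst n"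
    and quad: "triharmonic_symbol (real n) (mexp n) * pJL6 n ^ 2 * b^2 * ln (r / R)^2
      * r powr (mexp n - lexp n) \<le> 2 * Lconst n * w_up_remainder (lexp n) \<beta> (ln (r / R))"
  shows "u_up n b \<beta> R c r powr pJL6 n \<le> - rlap n (w_up n b \<beta> R c) r"
proof -
  define L p Q where "L = Lconst n" and "p = pJL6 n" and "Q = triharmonic_symbol (real n) (mexp n)"
  define \<tau> X G where "\<tau> = ln (r / R)" and "X = r powr (mexp n - lexp n)"
    and "G = w_up_remainder (lexp n) \<beta> \<tau>"
  define s where "s = X * (b * \<tau> - c * \<tau> powr \<beta>)"
  have X: "X > 0" and L: "L > 0" and Q: "Q > 0" and p: "p > 1"
    using R r Lconst_pos_powr[OF n] triharmonic_symbol_mexp_pos[OF n] pJL6_characterization(1,3)[OF n]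
    by (simp_all add: X_def L_def Q_def p_def)
  have "0 \<le> X * (c * \<tau> powr \<beta>)" using X c by simp
  then have s: "0 \<le> s" "s \<le> b * \<tau> * X"
    using sign X by (simp_all add: s_def \<tau>_def algebra_simps)
  with small have "s < L" by (simp add: \<tau>_def X_def L_def)
  have "0 \<le> Q * p^2 * b^2 * \<tau>^2 * X" using Q X by simp
  also have quad': "\<dots> \<le> 2 * L * G"
    using quad by (simp add: G_def \<tau>_def X_def L_def p_def Q_def)
  finally have G: "0 \<le> G" using L by (simp add: zero_le_mult_iff)
  have "Q * p^2 * s^2 \<le> Q * p^2 * (b * \<tau> * X)^2"
    using s Q by (intro mult_left_mono power_mono) auto
  also have "\<dots> = (Q * p^2 * b^2 * \<tau>^2 * X) * X" by (simp add: power2_eq_square)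
  also have "\<dots> \<le> 2 * L * G * X"
    using quad' X by (intro mult_right_mono) simp_all
  also have "\<dots> \<le> 2 * L * (c * X * G)"
    using mult_left_mono[of 1 c "2 * L * G * X"] L X G c by (simp add: algebra_simps)
  finally have "Q * L * (1 - s / L) powr p \<le> Q * L - p * Q * s + c * X * G"
    using L Q p s \<open>s < L\<close> by (intro mult_one_minus_powr_le) auto
  then show ?thesis
    using u_up_powr_eq[OF n _ \<open>s < L\<close>[unfolded s_def \<tau>_def X_def L_def]]
      rlap_w_up_eq[OF n R r, of b \<beta> c] R r
    by (simp add: s_def \<tau>_def X_def G_def L_def p_def Q_def mult_left_mono)
qed

theorem lemma4p4:
  fixes n :: nat and b \<beta> R :: real
  assumes hn: "n \<ge> 15"
    and hb: "b > 0" and h\<beta>: "0 < \<beta>" "\<beta> < 1" and hR: "R > 0"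
    and hS1: "{r. 0 < r \<and> u_low n b R r \<le> 0} \<noteq> {}" "bdd_above {r. 0 < r \<and> u_low n b R r \<le> 0}"
    and hS2: "{r. 0 < r \<and> v_low n b R r \<le> 0} \<noteq> {}" "bdd_above {r. 0 < r \<and> v_low n b R r \<le> 0}"
    and hS3: "{r. 0 < r \<and> w_low n b R r \<le> 0} \<noteq> {}" "bdd_above {r. 0 < r \<and> w_low n b R r \<le> 0}"
    and hord: "R < Sup {r. 0 < r \<and> u_low n b R r \<le> 0}"
      "Sup {r. 0 < r \<and> u_low n b R r \<le> 0} < Sup {r. 0 < r \<and> v_low n b R r \<le> 0}"
      "Sup {r. 0 < r \<and> v_low n b R r \<le> 0} < Sup {r. 0 < r \<and> w_low n b R r \<le> 0}"
  shows "\<exists>c1>0. \<forall>c>c1.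
     (\<forall>r>R. - rlap n (u_up n b \<beta> R c) r = v_up n b \<beta> R c r) \<and>
     (\<forall>r>R. - rlap n (v_up n b \<beta> R c) r = w_up n b \<beta> R c r) \<and>
     (\<forall>r > R * exp ((c / b) powr (1 / (1 - \<beta>))).
        - rlap n (w_up n b \<beta> R c) r \<ge> (u_up n b \<beta> R c r) powr (pJL6 n))"
proof -
  have nl: "real n = 2 * lexp n + 6" using lexp_eq[OF hn] by simp
  obtain T where T: "\<And>t. t \<ge> T \<Longrightarrow> 1 \<le> t
    \<and> b * t * (R * exp t) powr (mexp n - lexp n) < Lconst n
    \<and> triharmonic_symbol (real n) (mexp n) * pJL6 n ^ 2 * b^2 * t^2 * (R * exp t) powr (mexp n - lexp n)
      \<le> 2 * Lconst n * w_up_remainder (lexp n) \<beta> t"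
    using eventually_supersolution_conditions[OF hn hb h\<beta> hR]
    unfolding eventually_at_top_linorder by blast
  define c1 where "c1 = max 1 (b * \<bar>T\<bar> powr (1 - \<beta>))"
  show ?thesis
  proof (intro exI[of _ c1] conjI allI impI)
    show "c1 > 0" by (simp add: c1_def)
    fix c assume "c > c1"
    then have c: "c \<ge> 1" "\<bar>T\<bar> < (c / b) powr (1 / (1 - \<beta>))"
      using hb h\<beta> by (auto simp: c1_def field_simps intro!: less_powr_inverse)
    show "- rlap n (u_up n b \<beta> R c) r = v_up n b \<beta> R c r" if "r > R" for r
      using rlap_u_up[OF hR that] .
    show "- rlap n (v_up n b \<beta> R c) r = w_up n b \<beta> R c r" if "r > R" for r
      using rlap_v_up[OF hR that nl] .
    fix r assume r_gt: "r > R * exp ((c / b) powr (1 / (1 - \<beta>)))"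
    have "R \<le> R * exp ((c / b) powr (1 / (1 - \<beta>)))" using hR by simp
    with r_gt have r: "r > R" by linarith
    from r_gt hR have "exp ((c / b) powr (1 / (1 - \<beta>))) < r / R" by (simp add: field_simps)
    then have \<tau>: "(c / b) powr (1 / (1 - \<beta>)) < ln (r / R)"
      using ln_less_cancel_iff[of "exp ((c / b) powr (1 / (1 - \<beta>)))" "r / R"] r hR by simp
    then have "T \<le> ln (r / R)" using c by linarith
    moreover have "R * exp (ln (r / R)) = r" using r hR by simp
    ultimately show "u_up n b \<beta> R c r powr pJL6 n \<le> - rlap n (w_up n b \<beta> R c) r"
      using T[of "ln (r / R)"] mult_powr_less_of_gt[OF hb _ h\<beta>(2) \<tau>] c hb
      by (intro u_up_powr_le_rlap_w_up[OF hn hR r c(1)]) auto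
  qed
qed

end
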